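(* For all integers $m,n\ge1$, $$T_{2m-1,n}(q)=\sum_{r=0}^{m-1}(-1)^{n+r+1}\binom{2m-1}{r}\frac{(1-q^{m-r-\frac12})q^{(m-\frac12)n}}{(1-q)^{2m-1}(1+q^{m-r-\frac12})}+\sum_{r=0}^{m-1}(-1)^r\binom{2m-1}{r}\frac{(1-q^{(2n+1)(m-r-\frac12)})q^{rn}}{(1-q)^{2m-1}(1+q^{m-r-\frac12})}.$$
   Context: $q$ is an indeterminate and $q^{1/2}$ a fixed formal square root of $q$; identities are identities of rational functions in $q^{1/2}$. For integers $m,n\ge1$, $$T_{m,n}(q)=\sum_{k=1}^{n}(-1)^{n-k}\left(\frac{1-q^k}{1-q}\right)^{m}q^{\frac m2(n-k)}.$$ *)

theory Defs
  imports "HOL-Computational_Algebra.Polynomial" "HOL-Computational_Algebra.Fraction_Field"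
begin

text \<open>We work in the field of rational functions in the indeterminate \<open>s = q^(1/2)\<close>,
  i.e. the fraction field of \<open>\<rat>[s]\<close>.  Then \<open>q = s^2\<close> and \<open>q^(k/2) = s^k\<close>.\<close>

type_synonym ratfun = "rat poly fract"

definition qhalf :: ratfun where
  "qhalf = Fract [:0, 1:] 1"

definition qq :: ratfun where
  "qq = qhalf ^ 2"

text \<open>\<open>T m n\<close> as a rational function of \<open>q^(1/2)\<close>;
  the factor \<open>q^((m/2)(n-k))\<close> is \<open>(q^(1/2))^(m(n-k))\<close>.\<close>
definition T :: "nat \<Rightarrow> nat \<Rightarrow> ratfun" where
  "T m n = (\<Sum>k = 1..n. (-1) ^ (n - k) * ((1 - qq ^ k) / (1 - qq)) ^ m * qhalf ^ (m * (n - k)))"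

end

theory Submission
  imports Defs
begin

text \<open>Write \<open>s = q^(1/2)\<close>, \<open>M = 2m - 1\<close> and \<open>b\<^sub>r = M - 2r\<close>.  Pairing the binomial
  terms \<open>j = r\<close> and \<open>j = M - r\<close> gives
  \<open>(1 - q^k)^M = \<Sum>\<^sub>r<\<^sub>m (-1)^r (M choose r) (q^(rk) - q^((M-r)k))\<close>,
  so \<open>(1 - q)^M T\<^sub>M\<^sub>,\<^sub>n\<close> splits into \<open>m\<close> alternating sums over \<open>k\<close>.  After multiplication
  by \<open>1 + s^b\<^sub>r\<close> the \<open>r\<close>-th of them telescopes, leaving only the boundary terms \<open>k = 0\<close>
  and \<open>k = n\<close>, which are the two summands of the right-hand side.\<close>

lemma sum_alternating_telescope:
  fixes f :: "nat \<Rightarrow> 'a::comm_ring_1"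
  shows "(\<Sum>k = 1..n. (-1) ^ (n - k) * (f k + f (k - 1))) = f n - (-1) ^ n * f 0"
proof (induction n)
  case 0
  then show ?case by simp
next
  case (Suc n)
  have "(\<Sum>k = 1..Suc n. (-1) ^ (Suc n - k) * (f k + f (k - 1)))
      = (\<Sum>k = 1..n. (-1) ^ (Suc n - k) * (f k + f (k - 1))) + (f (Suc n) + f n)"
    by simp
  also have "(\<Sum>k = 1..n. (-1) ^ (Suc n - k) * (f k + f (k - 1)))
      = - (\<Sum>k = 1..n. (-1) ^ (n - k) * (f k + f (k - 1)))"
    by (simp add: sum_negf[symmetric] Suc_diff_le)
  finally show ?case
    unfolding Suc.IH by (simp add: algebra_simps)
qed

lemma one_minus_power_odd_binomial_pairs:
  fixes x :: "'a::comm_ring_1"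
  shows "(1 - x) ^ (2 * p + 1) =
    (\<Sum>r = 0..p. (-1) ^ r * of_nat ((2 * p + 1) choose r) * (x ^ r - x ^ (2 * p + 1 - r)))"
proof -
  let ?M = "2 * p + 1"
  let ?g = "\<lambda>j. (-1) ^ j * of_nat (?M choose j) * x ^ j :: 'a"
  have "(1 - x) ^ ?M = (\<Sum>j = 0..?M. ?g j)"
    using binomial_ring[of "-x" 1 ?M] by (simp add: atLeast0AtMost power_minus[of x] mult_ac)
  also have "\<dots> = (\<Sum>j = 0..p. ?g j) + (\<Sum>j = Suc p..?M. ?g j)"
    using sum.ub_add_nat[of 0 p ?g "Suc p"] by (simp add: mult_2)
  also have "(\<Sum>j = Suc p..?M. ?g j) = (\<Sum>r = 0..p. ?g (?M - r))"
    by (rule sum.reindex_bij_witness[of _ "\<lambda>j. ?M - j" "\<lambda>j. ?M - j"]) auto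
  also have "\<dots> = (\<Sum>r = 0..p. - ((-1) ^ r * of_nat (?M choose r) * x ^ (?M - r)))"
  proof (rule sum.cong[OF refl])
    fix r
    assume "r \<in> {0..p}"
    then have "?M - r = r + 2 * (p - r) + 1" and "?M choose (?M - r) = ?M choose r"
      by (auto intro: binomial_symmetric[symmetric])
    then show "?g (?M - r) = - ((-1) ^ r * of_nat (?M choose r) * x ^ (?M - r))"
      by (simp add: power_add power_mult)
  qed
  finally show ?thesis
    by (simp add: sum_negf[symmetric] sum.distrib[symmetric] algebra_simps)
qed

lemma one_plus_power_mult_alternating_sum:
  fixes s :: "'a::comm_ring_1"
  assumes M: "M = 2 * r + b"
  shows "(1 + s ^ b) * (\<Sum>k = 1..n. (-1) ^ (n - k) * ((((s ^ 2) ^ k) ^ r - ((s ^ 2) ^ k) ^ (M - r)) * s ^ (M * (n - k))))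
    = (-1) ^ (n + 1) * (1 - s ^ b) * s ^ (M * n) + (1 - s ^ ((2 * n + 1) * b)) * (s ^ 2) ^ (r * n)"
proof -
  define g where "g k = s ^ (2 * r * n + b * (n - k))" for k
  define h where "h k = s ^ (M * n + b * k)" for k
  have "(1 + s ^ b) * ((-1) ^ (n - k) * ((((s ^ 2) ^ k) ^ r - ((s ^ 2) ^ k) ^ (M - r)) * s ^ (M * (n - k))))
      = (-1) ^ (n - k) * ((g k - h (k + 1)) + (g (k - 1) - h k))"
    if "k \<in> {1..n}" for k
  proof -
    from that obtain d j where n: "n = k + d" and k: "k = Suc j"
      by (auto simp: le_iff_add Suc_le_eq dest: gr0_implies_Suc)
    have "(((s ^ 2) ^ k) ^ r - ((s ^ 2) ^ k) ^ (M - r)) * s ^ (M * (n - k)) = g k - h k"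
      and "g (k - 1) = s ^ b * g k" and "h (k + 1) = s ^ b * h k"
      unfolding g_def h_def n k M
      by (simp_all add: left_diff_distrib power_mult[symmetric] power_add[symmetric] algebra_simps)
    then show ?thesis
      by (simp only:) (simp add: algebra_simps)
  qed
  then have "(1 + s ^ b) * (\<Sum>k = 1..n. (-1) ^ (n - k) * ((((s ^ 2) ^ k) ^ r - ((s ^ 2) ^ k) ^ (M - r)) * s ^ (M * (n - k))))
      = (\<Sum>k = 1..n. (-1) ^ (n - k) * ((g k - h (k + 1)) + (g (k - 1) - h k)))"
    unfolding sum_distrib_left by (rule sum.cong[OF refl])
  also have "\<dots> = (g n - h (n + 1)) - (-1) ^ n * (g 0 - h 1)"
    using sum_alternating_telescope[of n "\<lambda>k. g k - h (k + 1)"] by simp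
  also have "\<dots> = (-1) ^ (n + 1) * (1 - s ^ b) * s ^ (M * n) + (1 - s ^ ((2 * n + 1) * b)) * (s ^ 2) ^ (r * n)"
  proof -
    have "g n = (s ^ 2) ^ (r * n)" and "h (n + 1) = s ^ ((2 * n + 1) * b) * (s ^ 2) ^ (r * n)"
      and "g 0 = s ^ (M * n)" and "h 1 = s ^ b * s ^ (M * n)"
      unfolding g_def h_def M by (simp_all add: power_mult[symmetric] power_add[symmetric] algebra_simps)
    then show ?thesis
      by (simp only:) (simp add: algebra_simps)
  qed
  finally show ?thesis .
qed

text \<open>No hypothesis \<open>s\<^sup>2 \<noteq> 1\<close> is needed: otherwise both sides are \<open>0\<close>, since \<open>x / 0 = 0\<close>.\<close>

lemma alternating_sum_odd_power_closed_form:
  fixes s :: "'a::field"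
  assumes b: "\<And>r. r \<le> p \<Longrightarrow> 1 + s ^ (2 * (p - r) + 1) \<noteq> 0"
  shows "(\<Sum>k = 1..n. (-1) ^ (n - k) * ((1 - (s ^ 2) ^ k) / (1 - s ^ 2)) ^ (2 * p + 1) * s ^ ((2 * p + 1) * (n - k))) =
    (\<Sum>r = 0..p. (-1) ^ (n + r + 1) * of_nat ((2 * p + 1) choose r) * ((1 - s ^ (2 * (p - r) + 1)) * s ^ ((2 * p + 1) * n))
      / ((1 - s ^ 2) ^ (2 * p + 1) * (1 + s ^ (2 * (p - r) + 1))))
  + (\<Sum>r = 0..p. (-1) ^ r * of_nat ((2 * p + 1) choose r) * ((1 - s ^ ((2 * n + 1) * (2 * (p - r) + 1))) * (s ^ 2) ^ (r * n))
      / ((1 - s ^ 2) ^ (2 * p + 1) * (1 + s ^ (2 * (p - r) + 1))))"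
proof -
  define M where "M = 2 * p + 1"
  define D where "D = (1 - s ^ 2) ^ M"
  define c where "c r = ((-1) ^ r * of_nat (M choose r) :: 'a)" for r
  define S where "S r = (\<Sum>k = 1..n. (-1) ^ (n - k) * ((((s ^ 2) ^ k) ^ r - ((s ^ 2) ^ k) ^ (M - r)) * s ^ (M * (n - k))))" for r
  have S: "c r * S r =
      ((-1) ^ (n + r + 1) * of_nat (M choose r) * ((1 - s ^ (2 * (p - r) + 1)) * s ^ (M * n))
     + (-1) ^ r * of_nat (M choose r) * ((1 - s ^ ((2 * n + 1) * (2 * (p - r) + 1))) * (s ^ 2) ^ (r * n)))
      / (1 + s ^ (2 * (p - r) + 1))" if "r \<le> p" for r
  proof -
    have "M = 2 * r + (2 * (p - r) + 1)"
      unfolding M_def using that by simp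
    from one_plus_power_mult_alternating_sum[OF this, of s n] b[OF that]
    have "S r = ((-1) ^ (n + 1) * (1 - s ^ (2 * (p - r) + 1)) * s ^ (M * n)
        + (1 - s ^ ((2 * n + 1) * (2 * (p - r) + 1))) * (s ^ 2) ^ (r * n)) / (1 + s ^ (2 * (p - r) + 1))"
      unfolding S_def by (simp add: eq_divide_eq mult.commute)
    then show ?thesis
      unfolding c_def by (simp add: power_add algebra_simps)
  qed
  have "(\<Sum>k = 1..n. (-1) ^ (n - k) * ((1 - (s ^ 2) ^ k) / (1 - s ^ 2)) ^ M * s ^ (M * (n - k)))
      = (\<Sum>k = 1..n. (-1) ^ (n - k) * (1 - (s ^ 2) ^ k) ^ M * s ^ (M * (n - k))) / D"
    unfolding D_def sum_divide_distrib by (simp add: power_divide)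
  also have "(\<Sum>k = 1..n. (-1) ^ (n - k) * (1 - (s ^ 2) ^ k) ^ M * s ^ (M * (n - k)))
      = (\<Sum>r = 0..p. c r * S r)"
    unfolding M_def one_minus_power_odd_binomial_pairs c_def S_def sum_distrib_left sum_distrib_right
    by (subst sum.swap) (simp add: mult_ac)
  also have "\<dots> / D = (\<Sum>r = 0..p. c r * S r / D)"
    by (simp add: sum_divide_distrib)
  finally have L: "(\<Sum>k = 1..n. (-1) ^ (n - k) * ((1 - (s ^ 2) ^ k) / (1 - s ^ 2)) ^ M * s ^ (M * (n - k)))
      = (\<Sum>r = 0..p. c r * S r / D)" .
  show ?thesis
    unfolding M_def[symmetric] D_def[symmetric] L sum.distrib[symmetric]
    by (intro sum.cong refl) (simp add: S, simp add: diff_divide_distrib mult.commute)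
qed

lemma Fract_poly_nonzero:
  fixes p :: "'a::field poly"
  assumes "poly p x \<noteq> 0"
  shows "Fract p 1 \<noteq> 0"
  using assms by (auto simp: Zero_fract_def eq_fract)

lemma qhalf_power: "qhalf ^ k = Fract ([:0, 1:] ^ k) 1"
  by (induction k) (simp_all add: qhalf_def One_fract_def)

lemma one_plus_qhalf_power_nonzero: "1 + qhalf ^ k \<noteq> 0"
proof -
  have "1 + qhalf ^ k = Fract (1 + [:0, 1:] ^ k) 1"
    by (simp add: qhalf_power One_fract_def)
  then show ?thesis
    using Fract_poly_nonzero[of "1 + [:0, 1:] ^ k" "1::rat"] by simp
qed

theorem lemma2p3:
  fixes m n :: nat
  assumes "m \<ge> 1" and "n \<ge> 1"
  shows "T (2 * m - 1) n =
    (\<Sum>r = 0..m - 1. (-1) ^ (n + r + 1) * of_nat ((2 * m - 1) choose r) *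
        ((1 - qhalf ^ (2 * (m - r) - 1)) * qhalf ^ ((2 * m - 1) * n))
        / ((1 - qq) ^ (2 * m - 1) * (1 + qhalf ^ (2 * (m - r) - 1))))
  + (\<Sum>r = 0..m - 1. (-1) ^ r * of_nat ((2 * m - 1) choose r) *
        ((1 - qhalf ^ ((2 * n + 1) * (2 * (m - r) - 1))) * qq ^ (r * n))
        / ((1 - qq) ^ (2 * m - 1) * (1 + qhalf ^ (2 * (m - r) - 1))))"
proof -
  obtain p where m: "m = Suc p"
    using assms(1) by (cases m) auto
  have exponents: "2 * m - 1 = 2 * p + 1" "m - 1 = p"
    and odd_exponent: "\<And>r. r \<le> p \<Longrightarrow> 2 * (m - r) - 1 = 2 * (p - r) + 1"
    using m by auto
  show ?thesis
    unfolding T_def qq_def exponents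
    by (rule trans[OF alternating_sum_odd_power_closed_form[OF one_plus_qhalf_power_nonzero]],
        intro arg_cong2[where f = "(+)"] sum.cong refl)
      (simp_all only: odd_exponent atLeastAtMost_iff)
qed

end
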